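(* Fix integers $n,k\ge1$ and let $E=\mathbb Z[q]/(\Phi_n(q)^k)$ and $G=\mathbb Z[e_n][x]/(x^k)$. Then: (a) $E$ and $G$ are free $\mathbb Z$-modules of the same rank $k\varphi(n)$. (b) The algebra homomorphism $\mathbb Z[q]\to\mathbb Z[e_n][x]$, $q\mapsto e_n+x$, descends to an algebra homomorphism $h:E\to G$, and $h$ is injective.
   Context: $\Phi_n(q)$ is the $n$th cyclotomic polynomial, $\varphi$ is Euler's totient function, and $e_n=\exp(2\pi i/n)$. *)

theory Defs
  imports "HOL-Analysis.Analysis" "HOL-Computational_Algebra.Polynomial" "HOL-Number_Theory.Totient"
begin

definition e_n :: "nat \<Rightarrow> complex" where
  "e_n n = exp (2 * of_real pi * \<i> / of_nat n)"

definition cyclo_C :: "nat \<Rightarrow> complex poly" where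
  "cyclo_C n = (\<Prod>j\<in>{j. 1 \<le> j \<and> j \<le> n \<and> coprime j n}. [:- (e_n n ^ j), 1:])"

definition cyclo :: "nat \<Rightarrow> int poly" where
  "cyclo n = (THE p. map_poly of_int p = cyclo_C n)"

definition Zen :: "nat \<Rightarrow> complex set" where
  "Zen n = {z. \<exists>p :: int poly. z = poly (map_poly of_int p) (e_n n)}"

definition Zen_poly :: "nat \<Rightarrow> complex poly set" where
  "Zen_poly n = {p. \<forall>i. coeff p i \<in> Zen n}"

text \<open>The quotient A/I (A a ring, I an ideal of A) is a free Z-module of rank r:
  there are b_0,...,b_{r-1} in A whose classes span A/I over Z and are Z-linearly independent in A/I.\<close>
definition quotient_free_Z_rank :: "'a::comm_ring_1 set \<Rightarrow> 'a set \<Rightarrow> nat \<Rightarrow> bool" where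
  "quotient_free_Z_rank A I r \<longleftrightarrow>
     (\<exists>b :: nat \<Rightarrow> 'a. (\<forall>i<r. b i \<in> A)
        \<and> (\<forall>a\<in>A. \<exists>c :: nat \<Rightarrow> int. a - (\<Sum>i<r. of_int (c i) * b i) \<in> I)
        \<and> (\<forall>c :: nat \<Rightarrow> int. (\<Sum>i<r. of_int (c i) * b i) \<in> I \<longrightarrow> (\<forall>i<r. c i = 0)))"

definition ideal_E :: "nat \<Rightarrow> nat \<Rightarrow> int poly set" where
  "ideal_E n k = {cyclo n ^ k * s | s. True}"

definition ideal_G :: "nat \<Rightarrow> nat \<Rightarrow> complex poly set" where
  "ideal_G n k = {monom 1 k * s | s. s \<in> Zen_poly n}"

definition hom0 :: "nat \<Rightarrow> int poly \<Rightarrow> complex poly" where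
  "hom0 n p = pcompose (map_poly of_int p) [:e_n n, 1:]"

end

theory Submission
  imports Defs "HOL-Computational_Algebra.Polynomial_Factorial"
    "HOL-Computational_Algebra.Fundamental_Theorem_Algebra"
begin

(* Everything rests on the classical fact that Phi_n is the minimal polynomial of e_n over Z:
   a monic integer polynomial of degree phi(n) dividing every integer polynomial that vanishes
   at e_n, with e_n a simple root.  We prove it from scratch: the monic minimal polynomial f of
   a root of unity exists (Gauss's lemma); by the Frobenius congruence g^l = g(x^l) mod l it
   also vanishes at eta^l for primes l not dividing n, hence at all primitive n-th roots of 1;
   conversely all its roots are primitive and simple, so f = cyclo_C n.

   Then (a) E has the Z-basis 1, q, ..., q^(N-1) (division by the monic Phi_n^k), and G has
   the Z-basis e_n^j x^m (j < phi(n), m < k), because 1, e_n, ..., e_n^(phi(n)-1) is a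
   Z-basis of Z[e_n]; (b) Phi_n(e_n + x) has no constant term, so (Phi_n^k) is mapped into
   (x^k), and conversely h(p) in (x^k) means (q - e_n)^k divides p in C[q], which forces
   Phi_n^k to divide p since e_n is a simple root of the minimal polynomial Phi_n. *)


lemma map_poly_of_int_add:
  "map_poly (of_int :: int \<Rightarrow> 'a::comm_ring_1) (p + q) = map_poly of_int p + map_poly of_int q"
  by (rule poly_eqI) (simp add: coeff_map_poly)

lemma map_poly_of_int_diff:
  "map_poly (of_int :: int \<Rightarrow> 'a::comm_ring_1) (p - q) = map_poly of_int p - map_poly of_int q"
  by (rule poly_eqI) (simp add: coeff_map_poly)

lemma map_poly_of_int_mult:
  "map_poly (of_int :: int \<Rightarrow> 'a::comm_ring_1) (p * q) = map_poly of_int p * map_poly of_int q"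
  by (rule poly_eqI) (simp add: coeff_map_poly coeff_mult)

lemma map_poly_of_int_smult:
  "map_poly (of_int :: int \<Rightarrow> 'a::comm_ring_1) (smult c p) = smult (of_int c) (map_poly of_int p)"
  by (rule poly_eqI) (simp add: coeff_map_poly)

lemma map_poly_of_int_power:
  "map_poly (of_int :: int \<Rightarrow> 'a::comm_ring_1) (p ^ m) = map_poly of_int p ^ m"
  by (induction m) (simp_all add: map_poly_of_int_mult)

lemma map_poly_of_int_sum:
  "map_poly (of_int :: int \<Rightarrow> 'a::comm_ring_1) (sum f A) = (\<Sum>i\<in>A. map_poly of_int (f i))"
  by (rule poly_eqI) (simp add: coeff_map_poly coeff_sum)

lemma map_poly_of_int_pCons:
  "map_poly (of_int :: int \<Rightarrow> 'a::comm_ring_1) (pCons a p) = pCons (of_int a) (map_poly of_int p)"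
  by (rule poly_eqI) (simp add: coeff_map_poly coeff_pCons split: nat.split)

lemma map_poly_of_int_of_nat:
  "map_poly (of_int :: int \<Rightarrow> 'a::comm_ring_1) (of_nat m) = of_nat m"
  by (rule poly_eqI) (simp add: coeff_map_poly of_nat_poly coeff_pCons split: nat.split)

lemma map_poly_of_int_pcompose:
  "map_poly (of_int :: int \<Rightarrow> 'a::comm_ring_1) (pcompose p q)
     = pcompose (map_poly of_int p) (map_poly of_int q)"
  by (induction p)
    (simp_all add: pcompose_pCons map_poly_of_int_pCons map_poly_of_int_add map_poly_of_int_mult)

lemma map_poly_of_int_inj:
  "map_poly (of_int :: int \<Rightarrow> 'a::{comm_ring_1,ring_char_0}) p = map_poly of_int q \<Longrightarrow> p = q"
  by (metis (no_types, lifting) coeff_map_poly of_int_0 of_int_eq_iff poly_eqI)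

abbreviation ipoly :: "int poly \<Rightarrow> complex \<Rightarrow> complex" where
  "ipoly p z \<equiv> poly (map_poly of_int p) z"

lemma ipoly_simps:
  "ipoly (p + q) z = ipoly p z + ipoly q z" "ipoly (p - q) z = ipoly p z - ipoly q z"
  "ipoly (p * q) z = ipoly p z * ipoly q z" "ipoly (smult c p) z = of_int c * ipoly p z"
  "ipoly (p ^ m) z = ipoly p z ^ m" "ipoly (monom c m) z = of_int c * z ^ m"
  "ipoly [:c:] z = of_int c" "ipoly (pCons c p) z = of_int c + z * ipoly p z"
  "ipoly (of_nat m) z = of_nat m" "ipoly 1 z = 1" "ipoly 0 z = 0"
  "ipoly (sum f A) z = (\<Sum>i\<in>A. ipoly (f i) z)" "ipoly (pcompose p q) z = ipoly p (ipoly q z)"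
  by (simp_all add: map_poly_of_int_add map_poly_of_int_diff map_poly_of_int_mult
      map_poly_of_int_smult map_poly_of_int_power map_poly_monom poly_monom map_poly_of_int_of_nat
      map_poly_of_int_sum poly_sum map_poly_of_int_pcompose poly_pcompose map_poly_of_int_pCons)

lemma pcompose_power_left: "pcompose (p ^ k) q = pcompose p q ^ k"
  by (induction k) (simp_all add: pcompose_mult pcompose_1)

lemma pcompose_monom_one: "pcompose (monom 1 k) q = q ^ k"
  by (simp add: monom_altdef pcompose_power_left pcompose_pCons)

lemma coeff_sum_monom: "coeff (\<Sum>i<N. monom (c i) i) m = (if m < N then c m else 0)"
  by (simp add: coeff_sum coeff_monom)

lemma degree_sum_monom_less: "N > 0 \<Longrightarrow> degree (\<Sum>i<N. monom (c i) i) < N"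
proof (rule ccontr)
  assume "N > 0" and "\<not> degree (\<Sum>i<N. monom (c i) i) < N"
  then have "coeff (\<Sum>i<N. monom (c i) i) (degree (\<Sum>i<N. monom (c i) i)) \<noteq> 0"
    by (metis leading_coeff_0_iff degree_0 not_le)
  then show False using \<open>\<not> degree (\<Sum>i<N. monom (c i) i) < N\<close> by (simp add: coeff_sum_monom)
qed

lemma sum_monom_coeff: "degree r < N \<or> r = 0 \<Longrightarrow> (\<Sum>i<N. monom (coeff r i) i) = r"
  by (rule poly_eqI) (auto simp: coeff_sum_monom coeff_eq_0)


section \<open>Congruences modulo a prime\<close>

lemma binomial_prime_power:
  fixes a b :: "'a::comm_ring_1"
  assumes "prime (l::nat)"
  shows "\<exists>w. (a + b) ^ l = a ^ l + b ^ l + of_nat l * w"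
proof -
  have l: "l > 1" using assms prime_gt_1_nat by blast
  define g where "g k = of_nat (l choose k) * a ^ k * b ^ (l - k)" for k
  have "(a + b) ^ l = (\<Sum>k\<le>l. g k)" unfolding g_def binomial_ring by simp
  also have "{..l} = {0, l} \<union> {1..<l}" using l by auto
  also have "sum g ({0, l} \<union> {1..<l}) = sum g {0, l} + sum g {1..<l}"
    by (rule sum.union_disjoint) auto
  also have "sum g {0, l} = a ^ l + b ^ l" using l by (simp add: g_def)
  also have "sum g {1..<l}
      = of_nat l * (\<Sum>k\<in>{1..<l}. of_nat ((l choose k) div l) * a ^ k * b ^ (l - k))"
    unfolding sum_distrib_left
  proof (rule sum.cong)
    fix k assume k: "k \<in> {1..<l}"
    have "l dvd l choose k" using k l assms by (intro dvd_choose_prime) auto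
    then have "l choose k = l * ((l choose k) div l)" by simp
    then show "g k = of_nat l * (of_nat ((l choose k) div l) * a ^ k * b ^ (l - k))"
      unfolding g_def by (metis (no_types, lifting) mult.assoc of_nat_mult)
  qed simp
  finally show ?thesis by blast
qed

text \<open>Fermat's little theorem for integers, reduced to naturals by taking residues.\<close>
lemma fermat_little_int:
  assumes "prime (l::nat)"
  shows "int l dvd a ^ l - a"
proof -
  have nat_case: "int l dvd int m ^ l - int m" for m :: nat
  proof (induction m)
    case 0 then show ?case using assms prime_gt_0_nat by (simp add: power_0_left)
  next
    case (Suc m)
    obtain w where w: "(int m + 1) ^ l = int m ^ l + 1 ^ l + of_nat l * w"
      using binomial_prime_power[OF assms] by blast
    have "int (Suc m) ^ l - int (Suc m) = (int m ^ l - int m) + int l * w"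
      using w by (simp add: algebra_simps)
    then show ?case using Suc.IH by (metis dvd_add dvd_triv_left)
  qed
  define r where "r = a mod int l"
  have "r \<ge> 0" using assms prime_gt_0_nat by (simp add: r_def)
  then have "int l dvd r ^ l - r" using nat_case[of "nat r"] by simp
  moreover have "(r ^ l - r) mod int l = (a ^ l - a) mod int l"
    by (rule mod_diff_cong) (simp_all add: r_def power_mod)
  ultimately show ?thesis by (simp add: dvd_eq_mod_eq_0)
qed

lemma frobenius_congruence:
  fixes p :: "int poly"
  assumes "prime (l::nat)"
  shows "\<exists>h. p ^ l = pcompose p (monom 1 l) + of_nat l * h"
proof (induction p)
  case 0
  then show ?case using assms prime_gt_0_nat by (auto simp: power_0_left intro: exI[of _ 0])
next
  case (pCons a p)
  then obtain h where h: "p ^ l = pcompose p (monom 1 l) + of_nat l * h" by blast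
  obtain w where w: "([:a:] + [:0,1:] * p) ^ l = [:a:] ^ l + ([:0,1:] * p) ^ l + of_nat l * w"
    using binomial_prime_power[OF assms] by blast
  obtain t where "a ^ l - a = int l * t" using fermat_little_int[OF assms, of a] by (elim dvdE)
  then have t: "a ^ l = a + int l * t" by simp
  have xl: "[:0,1:] ^ l = (monom 1 l :: int poly)" by (simp add: monom_altdef)
  have "[:a:] ^ l = [:a ^ l:]" by (induction l) auto
  then have const_pow: "[:a:] ^ l = [:a:] + of_nat l * [:t:]" unfolding t by (simp add: of_nat_poly)
  have "pCons a p ^ l = ([:a:] + [:0,1:] * p) ^ l" by simp
  also have "\<dots> = ([:a:] + monom 1 l * pcompose p (monom 1 l)) + of_nat l * ([:t:] + monom 1 l * h + w)"
    unfolding w power_mult_distrib xl const_pow h by (simp add: algebra_simps)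
  also have "[:a:] + monom 1 l * pcompose p (monom 1 l) = pcompose (pCons a p) (monom 1 l)"
    by (simp add: pcompose_pCons)
  finally show ?case by blast
qed


section \<open>Minimal polynomials of roots of unity\<close>

definition int_minpoly :: "int poly \<Rightarrow> complex \<Rightarrow> bool" where
  "int_minpoly f z \<longleftrightarrow> lead_coeff f = 1 \<and> ipoly f z = 0 \<and> (\<forall>p. ipoly p z = 0 \<longrightarrow> f dvd p)"

lemma int_minpolyD:
  assumes "int_minpoly f z"
  shows "lead_coeff f = 1" "ipoly f z = 0" "ipoly p z = 0 \<Longrightarrow> f dvd p"
  using assms by (auto simp: int_minpoly_def)

lemma int_minpoly_degree_le:
  "int_minpoly f z \<Longrightarrow> r \<noteq> 0 \<Longrightarrow> ipoly r z = 0 \<Longrightarrow> degree f \<le> degree r"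
  by (simp add: int_minpoly_def dvd_imp_degree_le)

lemma int_minpoly_degree_pos: "int_minpoly f z \<Longrightarrow> degree f \<noteq> 0"
  by (metis degree_0_id int_minpolyD(1,2) one_neq_zero poly_1 map_poly_1' of_int_1 pCons_one)

text \<open>Gauss's lemma in the form needed: a primitive integer polynomial of least degree
  vanishing at z divides every integer polynomial vanishing at z.\<close>
lemma primitive_least_degree_dvd:
  fixes f p :: "int poly"
  assumes f0: "f \<noteq> 0" and cf: "content f = 1" and evf: "ipoly f z = 0"
    and least: "\<And>r. r \<noteq> 0 \<Longrightarrow> ipoly r z = 0 \<Longrightarrow> degree f \<le> degree r"
    and evp: "ipoly p z = 0"
  shows "f dvd p"
proof -
  obtain q r where pd: "pseudo_divmod p f = (q, r)" by fastforce
  define c where "c = lead_coeff f ^ (Suc (degree p) - degree f)"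
  have c0: "c \<noteq> 0" using f0 by (simp add: c_def)
  from pseudo_divmod[OF f0 pd] have eq: "smult c p = f * q + r"
    and rd: "r = 0 \<or> degree r < degree f" by (simp_all add: c_def)
  have "ipoly r z = 0" using arg_cong[OF eq, of "\<lambda>p. ipoly p z"] evp evf by (simp add: ipoly_simps)
  then have "r = 0" using least rd by fastforce
  then have "fract_poly f dvd fract_poly (smult c p)" using eq by (simp add: fract_poly_dvd)
  then have "fract_poly f dvd fract_poly p" using c0 by (simp add: dvd_smult_iff)
  then show "f dvd p" using cf by (rule fract_poly_dvdD)
qed

text \<open>Every algebraic integer z (a root of a monic integer polynomial X) has a monic minimal
  polynomial: normalize the primitive part of a nonzero polynomial of least degree vanishing
  at z; its leading coefficient divides that of X, hence is a unit.\<close>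
lemma algebraic_integer_int_minpoly:
  fixes \<eta> :: complex
  assumes lcX: "lead_coeff X = 1" and evX: "ipoly X \<eta> = 0"
  obtains f where "int_minpoly f \<eta>"
proof -
  have X0: "X \<noteq> 0" using lcX by auto
  define P where "P d \<longleftrightarrow> (\<exists>r. r \<noteq> 0 \<and> ipoly r \<eta> = 0 \<and> degree r = d)" for d
  obtain m where m: "m \<noteq> 0" "ipoly m \<eta> = 0" "degree m = (LEAST d. P d)"
    using LeastI[of P "degree X"] X0 evX P_def by blast
  have least: "degree m \<le> degree r" if "r \<noteq> 0" "ipoly r \<eta> = 0" for r
    unfolding m(3) using that P_def by (intro Least_le) blast
  define f0 where "f0 = primitive_part m"
  have cm: "content m \<noteq> 0" using m(1) by simp
  have f00: "f0 \<noteq> 0" using m(1) by (simp add: f0_def)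
  have "m = smult (content m) f0" by (simp add: f0_def content_times_primitive_part)
  then have "ipoly m \<eta> = of_int (content m) * ipoly f0 \<eta>"
    using arg_cong[of _ _ "\<lambda>p. ipoly p \<eta>"] by (metis ipoly_simps(4))
  then have evf0: "ipoly f0 \<eta> = 0" using m(2) cm by simp
  have dvd0: "f0 dvd p" if "ipoly p \<eta> = 0" for p
    using primitive_least_degree_dvd[OF f00 _ evf0 _ that] least m(1)
    by (simp add: f0_def content_primitive_part degree_primitive_part)
  obtain g where "X = f0 * g" using dvd0[OF evX] by (elim dvdE)
  then have "lead_coeff f0 * lead_coeff g = 1" using lcX by (simp add: lead_coeff_mult)
  then have u: "lead_coeff f0 = 1 \<or> lead_coeff f0 = -1" by (rule pos_zmult_eq_1_iff_lemma)
  define f where "f = smult (lead_coeff f0) f0"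
  have "f dvd f0" using u by (auto simp: f_def)
  then have "int_minpoly f \<eta>"
    unfolding int_minpoly_def using u evf0 dvd0 dvd_trans
    by (auto simp: f_def lead_coeff_smult ipoly_simps)
  then show ?thesis by (rule that)
qed

lemma root_of_unity_int_minpoly:
  fixes \<eta> :: complex
  assumes "\<eta> ^ n = 1" "n \<ge> 1"
  obtains f where "int_minpoly f \<eta>"
proof (rule algebraic_integer_int_minpoly)
  have cX: "coeff (monom 1 n - 1 :: int poly) n = 1" using assms(2) by (simp add: coeff_monom)
  moreover have "degree (monom 1 n - 1 :: int poly) \<le> n"
    by (rule degree_diff_le) (auto simp: degree_monom_le)
  ultimately show "lead_coeff (monom 1 n - 1 :: int poly) = 1" by (metis antisym le_degree zero_neq_one)
  show "ipoly (monom 1 n - 1) \<eta> = 0" using assms(1) by (simp add: ipoly_simps)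
qed

lemma int_minpoly_dvd_X_pow_minus_1:
  "int_minpoly f \<eta> \<Longrightarrow> \<eta> ^ n = 1 \<Longrightarrow> f dvd monom 1 n - 1"
  by (simp add: int_minpoly_def ipoly_simps)

lemma double_root_pderiv:
  fixes p :: "'a::idom poly"
  assumes "[:-b, 1:] ^ 2 dvd p"
  shows "poly (pderiv p) b = 0"
proof -
  from assms obtain s where "p = [:-b, 1:] * ([:-b, 1:] * s)"
    by (metis dvdE power2_eq_square mult.assoc)
  then have "pderiv p = [:-b, 1:] * pderiv ([:-b, 1:] * s) + ([:-b, 1:] * s) * pderiv [:-b, 1:]"
    by (simp only: pderiv_mult)
  then show ?thesis by simp
qed

text \<open>The minimal polynomial of a root of unity has no repeated roots, because it divides
  the separable polynomial x^n - 1.\<close>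
lemma int_minpoly_no_double_root:
  fixes \<beta> \<eta> :: complex
  assumes n: "n \<ge> 1" and f: "int_minpoly f \<eta>" and \<eta>: "\<eta> ^ n = 1" and \<beta>: "\<beta> ^ n = 1"
  shows "\<not> [:-\<beta>, 1:] ^ 2 dvd map_poly of_int f"
proof
  assume "[:-\<beta>, 1:] ^ 2 dvd map_poly of_int f"
  moreover have "map_poly of_int f dvd (map_poly of_int (monom 1 n - 1) :: complex poly)"
    using int_minpoly_dvd_X_pow_minus_1[OF f \<eta>] by (auto elim!: dvdE simp: map_poly_of_int_mult)
  ultimately have "[:-\<beta>, 1:] ^ 2 dvd (map_poly of_int (monom 1 n - 1) :: complex poly)"
    by (rule dvd_trans)
  then have "poly (pderiv (map_poly of_int (monom 1 n - 1))) \<beta> = 0"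
    by (rule double_root_pderiv)
  then have "of_nat n * \<beta> ^ (n - 1) = 0"
    by (simp add: map_poly_of_int_diff map_poly_monom pderiv_diff pderiv_monom pderiv_1 poly_monom)
  moreover have "\<beta> \<noteq> 0" using \<beta> n by (cases n) auto
  ultimately show False using n by simp
qed

lemma int_minpoly_order_le_1:
  assumes "n \<ge> 1" "int_minpoly f \<eta>" "\<eta> ^ n = 1"
  shows "order \<eta> (map_poly of_int f) \<le> 1"
  using int_minpoly_no_double_root[OF assms assms(3)] order_divides[of \<eta> 2 "map_poly of_int f"]
  by fastforce

text \<open>If an integer m is l times an element of Z[z], where z has a monic minimal polynomial f,
  then l divides m: reducing that element modulo f leaves a polynomial r of degree below
  deg f with l * r(z) - m = 0, which forces l * r - m = 0.\<close>
lemma int_minpoly_dvd_of_multiple: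
  fixes l m :: int
  assumes f: "int_minpoly f z" and m: "of_int m = of_int l * ipoly Q z"
  shows "l dvd m"
proof -
  have lcf: "lead_coeff f = 1" and f0: "f \<noteq> 0" using int_minpolyD(1)[OF f] by auto
  obtain s r where pd: "pseudo_divmod Q f = (s, r)" by fastforce
  from pseudo_divmod[OF f0 pd] lcf have eq: "Q = f * s + r" and rd: "r = 0 \<or> degree r < degree f"
    by simp_all
  define R where "R = smult l r - [:m:]"
  have "ipoly R z = 0"
    using m arg_cong[OF eq, of "\<lambda>p. ipoly p z"] int_minpolyD(2)[OF f] by (simp add: R_def ipoly_simps)
  moreover have "degree R < degree f"
    using rd int_minpoly_degree_pos[OF f] degree_diff_le_max[of "smult l r" "[:m:]"]
      degree_smult_le[of l r] unfolding R_def by auto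
  ultimately have "R = 0" using int_minpoly_degree_le[OF f] by fastforce
  then have "l * coeff r 0 = m" by (metis R_def coeff_smult coeff_pCons_0 coeff_0 eq_iff_diff_eq_0 coeff_diff)
  then show ?thesis by (metis dvd_triv_left)
qed

text \<open>The heart of the irreducibility of cyclotomic polynomials: if f is the minimal
  polynomial of an n-th root of unity eta and l is a prime not dividing n, then f(eta^l) = 0.
  Otherwise the cofactor g of f in x^n - 1 vanishes at eta^l, so by the Frobenius congruence
  l divides g(eta)^l, and (from the derivative of x^n - 1 = f g) also n^l, a contradiction.\<close>
lemma int_minpoly_prime_power_root:
  fixes \<eta> :: complex
  assumes eta: "\<eta> ^ n = 1" and n: "n \<ge> 1" and f: "int_minpoly f \<eta>"
    and l: "prime l" and ln: "\<not> l dvd n"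
  shows "ipoly f (\<eta> ^ l) = 0"
proof (rule ccontr)
  assume nz: "ipoly f (\<eta> ^ l) \<noteq> 0"
  define X :: "int poly" where "X = monom 1 n - 1"
  have evX: "ipoly X z = z ^ n - 1" for z by (simp add: X_def ipoly_simps)
  obtain g where g: "X = f * g"
    using int_minpoly_dvd_X_pow_minus_1[OF f eta] by (auto simp: X_def elim: dvdE)
  have "(\<eta> ^ l) ^ n = (\<eta> ^ n) ^ l" by (metis power_mult mult.commute)
  then have evg: "ipoly g (\<eta> ^ l) = 0"
    using arg_cong[OF g, of "\<lambda>p. ipoly p (\<eta> ^ l)"] evX eta nz by (simp add: ipoly_simps)
  obtain h where h: "g ^ l = pcompose g (monom 1 l) + of_nat l * h"
    using frobenius_congruence[OF l] by blast
  have G: "ipoly g \<eta> ^ l = of_nat l * ipoly h \<eta>"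
    using arg_cong[OF h, of "\<lambda>p. ipoly p \<eta>"] evg by (simp add: ipoly_simps)
  have "pderiv X = f * pderiv g + g * pderiv f" using g by (simp add: pderiv_mult)
  then have "ipoly (pderiv X) \<eta> = ipoly g \<eta> * ipoly (pderiv f) \<eta>"
    using int_minpolyD(2)[OF f] by (simp add: ipoly_simps)
  moreover have "ipoly (pderiv X) \<eta> = of_nat n * \<eta> ^ (n - 1)"
    by (simp add: X_def pderiv_diff pderiv_monom pderiv_1 ipoly_simps)
  ultimately have D: "of_nat n * \<eta> ^ (n - 1) = ipoly g \<eta> * ipoly (pderiv f) \<eta>" by simp
  define Q where "Q = monom 1 l * h * pderiv f ^ l"
  have "l + (n - 1) * l = n * l" using n by (cases n) auto
  then have "\<eta> ^ l * \<eta> ^ ((n - 1) * l) = (\<eta> ^ n) ^ l" by (metis power_add power_mult)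
  then have "\<eta> ^ l * \<eta> ^ ((n - 1) * l) = 1" using eta by simp
  then have "of_nat (n ^ l) = \<eta> ^ l * (of_nat n * \<eta> ^ (n - 1)) ^ l"
    by (simp add: power_mult_distrib power_mult[symmetric] mult.commute del: power_mult)
  also have "\<dots> = of_nat l * ipoly Q \<eta>" using G D by (simp add: Q_def ipoly_simps power_mult_distrib)
  finally have "of_int (int (n ^ l)) = of_int (int l) * ipoly Q \<eta>" by simp
  then have "int l dvd int (n ^ l)" by (rule int_minpoly_dvd_of_multiple[OF f])
  then have "l dvd n ^ l" by (simp only: of_nat_dvd_iff)
  then show False using l ln prime_dvd_power_nat by blast
qed

text \<open>Iterating over the prime factors of j: f vanishes at eta^j for every j coprime to n.\<close>
lemma int_minpoly_coprime_power_root: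
  fixes \<eta> :: complex
  assumes eta: "\<eta> ^ n = 1" and n: "n \<ge> 1" and f: "int_minpoly f \<eta>" and j: "coprime j n"
  shows "ipoly f (\<eta> ^ j) = 0"
  using j f eta
proof (induction j arbitrary: f \<eta> rule: less_induct)
  case (less j)
  show ?case
  proof (cases "j \<le> 1")
    case True
    have "\<eta> ^ j = \<eta>"
    proof (cases "j = 0")
      case True
      then have "n = 1" using less.prems(1) by simp
      then show ?thesis using True less.prems(3) by simp
    next
      case False
      then show ?thesis using \<open>j \<le> 1\<close> by (simp add: le_Suc_eq)
    qed
    then show ?thesis using less.prems(2) by (simp add: int_minpolyD)
  next
    case False
    then obtain l where "prime l" "l dvd j" using prime_factor_nat[of j] by auto
    then obtain j' where j_eq: "j = l * j'" by (elim dvdE)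
    have "j' < j" using j_eq False prime_gt_1_nat[OF \<open>prime l\<close>] by (cases "j' = 0") auto
    have cj: "coprime j' n" "coprime l n" using less.prems(1) j_eq by (simp_all add: coprime_mult_left_iff)
    have ln: "\<not> l dvd n"
    proof
      assume "l dvd n"
      then have "l dvd gcd l n" by simp
      then show False using cj(2) \<open>prime l\<close> by (simp add: not_prime_1)
    qed
    define \<theta> where "\<theta> = \<eta> ^ j'"
    have th: "\<theta> ^ n = 1" unfolding \<theta>_def using less.prems(3) by (metis power_mult mult.commute power_one)
    obtain g where g: "int_minpoly g \<theta>" using root_of_unity_int_minpoly[OF th n] by blast
    have "ipoly f \<theta> = 0" unfolding \<theta>_def using less.IH[OF \<open>j' < j\<close> cj(1) less.prems(2,3)] .
    then have "g dvd f" by (rule int_minpolyD(3)[OF g])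
    then obtain u where "f = g * u" by (elim dvdE)
    moreover have "ipoly g (\<theta> ^ l) = 0" using int_minpoly_prime_power_root[OF th n g \<open>prime l\<close> ln] .
    moreover have "\<theta> ^ l = \<eta> ^ j" unfolding \<theta>_def j_eq by (metis power_mult mult.commute)
    ultimately show ?thesis by (simp add: ipoly_simps)
  qed
qed


section \<open>The primitive n-th roots of unity and the cyclotomic polynomial\<close>

lemma e_n_power: "e_n n ^ j = exp (2 * of_real pi * \<i> * of_nat j / of_nat n)"
  unfolding e_n_def exp_of_nat_mult[symmetric] by (simp add: field_simps)

lemma e_n_power_eq_1: "n \<ge> 1 \<Longrightarrow> e_n n ^ j = 1 \<longleftrightarrow> n dvd j"
  by (simp add: e_n_power complex_root_unity_eq_1)

lemma e_n_power_eq: "n \<ge> 1 \<Longrightarrow> e_n n ^ i = e_n n ^ j \<longleftrightarrow> i mod n = j mod n"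
  by (simp add: e_n_power complex_root_unity_eq)

lemma e_n_power_n: "n \<ge> 1 \<Longrightarrow> e_n n ^ n = 1"
  by (simp add: e_n_power_eq_1)

lemma root_of_unity_e_n_power:
  assumes n: "n \<ge> 1" and z: "z ^ n = 1"
  obtains j where "j < n" "z = e_n n ^ j"
proof -
  have "bij_betw (\<lambda>j. cis (2 * pi * real j / real n)) {..<n} {z. z ^ n = 1}"
    by (rule Complex.bij_betw_roots_unity) (use n in simp)
  then have "(\<lambda>j. cis (2 * pi * real j / real n)) ` {..<n} = {z. z ^ n = 1}"
    by (rule bij_betw_imp_surj_on)
  then have "z \<in> (\<lambda>j. cis (2 * pi * real j / real n)) ` {..<n}" using z by blast
  then obtain j where "j < n" "z = cis (2 * pi * real j / real n)" by blast
  moreover have "cis (2 * pi * real j / real n) = e_n n ^ j"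
    by (simp add: e_n_power cis_conv_exp field_simps)
  ultimately show ?thesis using that by simp
qed

definition primitive_roots :: "nat \<Rightarrow> complex set" where
  "primitive_roots n = (\<lambda>j. e_n n ^ j) ` {j. 1 \<le> j \<and> j \<le> n \<and> coprime j n}"

lemma primitive_root_power_n:
  assumes "n \<ge> 1" "\<beta> \<in> primitive_roots n"
  shows "\<beta> ^ n = 1"
proof -
  obtain j where "\<beta> = e_n n ^ j" using assms(2) by (auto simp: primitive_roots_def)
  then have "\<beta> ^ n = (e_n n ^ n) ^ j" by (metis power_mult mult.commute)
  then show ?thesis using e_n_power_n[OF assms(1)] by simp
qed

lemma cyclo_C_primitive_roots:
  assumes n: "n \<ge> 1"
  shows "cyclo_C n = (\<Prod>a\<in>primitive_roots n. [:-a, 1:])"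
    and "card (primitive_roots n) = totient n"
proof -
  define J where "J = {j. 1 \<le> j \<and> j \<le> n \<and> coprime j n}"
  have inj: "inj_on (\<lambda>j. e_n n ^ j) J"
  proof (rule inj_onI)
    fix i j assume "i \<in> J" "j \<in> J" "e_n n ^ i = e_n n ^ j"
    then show "i = j" using e_n_power_eq[OF n]
      by (metis (mono_tags) J_def le_neq_implies_less mem_Collect_eq mod_less mod_self
          not_one_le_zero le_trans)
  qed
  show "cyclo_C n = (\<Prod>a\<in>primitive_roots n. [:-a, 1:])"
    unfolding cyclo_C_def primitive_roots_def J_def[symmetric] using inj by (simp add: prod.reindex)
  have "J = totatives n" by (auto simp: J_def totatives_def)
  then show "card (primitive_roots n) = totient n"
    unfolding primitive_roots_def J_def[symmetric] using inj by (simp add: card_image totient_def)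
qed

lemma root_of_unity_cases:
  assumes n: "n \<ge> 1" and \<beta>: "\<beta> ^ n = 1"
  obtains "\<beta> \<in> primitive_roots n" | m where "1 \<le> m" "m < n" "\<beta> ^ m = 1"
proof -
  obtain j where j: "j < n" "\<beta> = e_n n ^ j" using root_of_unity_e_n_power[OF n \<beta>] .
  show ?thesis
  proof (cases "coprime j n")
    case True
    define j' where "j' = (if j = 0 then n else j)"
    have "\<beta> = e_n n ^ j'" using j e_n_power_n[OF n] by (simp add: j'_def)
    moreover have "1 \<le> j' \<and> j' \<le> n \<and> coprime j' n" using True j n by (auto simp: j'_def)
    ultimately show ?thesis using that(1) by (auto simp: primitive_roots_def)
  next
    case False
    define g where "g = gcd j n"
    have "g \<noteq> 1" "g > 0" using False n by (simp_all add: g_def coprime_iff_gcd_eq_1)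
    then have "g \<ge> 2" by linarith
    define m where "m = n div g"
    have nm: "n = m * g" by (simp add: m_def g_def)
    have m1: "1 \<le> m" using nm n by (cases m) auto
    moreover have "m * 2 \<le> m * g" using \<open>g \<ge> 2\<close> by simp
    ultimately have m: "1 \<le> m" "m < n" using nm by linarith+
    obtain j2 where "j = g * j2" using g_def by (metis dvdE gcd_dvd1)
    then have "\<beta> ^ m = (e_n n ^ n) ^ j2" using j(2) nm by (simp add: ac_simps flip: power_mult)
    then show ?thesis using that(2)[OF m] e_n_power_n[OF n] by simp
  qed
qed

text \<open>All roots of the minimal polynomial of e_n are primitive n-th roots of unity: a root
  beta of smaller order would make beta's minimal polynomial a proper factor vanishing at e_n.\<close>
lemma int_minpoly_e_n_roots_primitive:
  assumes n: "n \<ge> 1" and f: "int_minpoly f (e_n n)" and \<beta>: "ipoly f \<beta> = 0"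
  shows "\<beta> \<in> primitive_roots n"
proof -
  obtain w where "monom 1 n - 1 = f * w"
    using int_minpoly_dvd_X_pow_minus_1[OF f e_n_power_n[OF n]] by (elim dvdE)
  then have "ipoly (monom 1 n - 1) \<beta> = 0" using \<beta> by (simp add: ipoly_simps)
  then have \<beta>n: "\<beta> ^ n = 1" by (simp add: ipoly_simps)
  show ?thesis
  proof (cases rule: root_of_unity_cases[OF n \<beta>n])
    case 1
    then show ?thesis .
  next
    case (2 m)
    obtain h where h: "int_minpoly h \<beta>" using root_of_unity_int_minpoly[OF \<beta>n n] by blast
    obtain v where v: "f = h * v" using int_minpolyD(3)[OF h \<beta>] by (elim dvdE)
    have f0: "f \<noteq> 0" using int_minpolyD(1)[OF f] by auto
    have "ipoly h (e_n n) * ipoly v (e_n n) = 0" using int_minpolyD(2)[OF f] v by (simp add: ipoly_simps)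
    then consider (cofactor) "ipoly v (e_n n) = 0" | (factor) "ipoly h (e_n n) = 0" by auto
    then show ?thesis
    proof cases
      case cofactor
      then have "degree f \<le> degree v" using int_minpoly_degree_le[OF f] v f0 by simp
      then show ?thesis using v f0 int_minpoly_degree_pos[OF h] by (simp add: degree_mult_eq)
    next
      case factor
      then have "f dvd monom 1 m - 1"
        using int_minpolyD(3)[OF f] int_minpoly_dvd_X_pow_minus_1[OF h \<open>\<beta> ^ m = 1\<close>] dvd_trans by blast
      then obtain w where "monom 1 m - 1 = f * w" by (elim dvdE)
      then have "ipoly (monom 1 m - 1) (e_n n) = ipoly f (e_n n) * ipoly w (e_n n)"
        by (simp add: ipoly_simps)
      then have "e_n n ^ m = 1" using int_minpolyD(2)[OF f] by (simp add: ipoly_simps)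
      then show ?thesis using e_n_power_eq_1[OF n] \<open>1 \<le> m\<close> \<open>m < n\<close> by (auto dest: dvd_imp_le)
    qed
  qed
qed

lemma prod_linear_dvd:
  fixes p :: "complex poly"
  assumes "finite A" "\<forall>a\<in>A. poly p a = 0"
  shows "(\<Prod>a\<in>A. [:-a, 1:]) dvd p"
  using assms
proof (induction A arbitrary: p rule: finite_induct)
  case empty then show ?case by simp
next
  case (insert a A)
  obtain q where q: "p = [:-a, 1:] * q" using insert.prems by (auto simp: poly_eq_0_iff_dvd elim: dvdE)
  have "poly q b = 0" if "b \<in> A" for b using insert that by (auto simp: q)
  then have "(\<Prod>a\<in>A. [:-a, 1:]) dvd q" using insert.IH by blast
  then have "[:-a, 1:] * (\<Prod>a\<in>A. [:-a, 1:]) dvd [:-a, 1:] * q" by (rule mult_dvd_mono[OF dvd_refl])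
  then show ?case by (simp only: prod.insert[OF insert(1,2)] q)
qed

text \<open>The minimal polynomial of e_n is the polynomial defining cyclo_C n: the latter divides
  it, and the cofactor has no root since the roots of the minimal polynomial are simple
  primitive roots.\<close>
lemma int_minpoly_e_n_eq_cyclo_C:
  assumes n: "n \<ge> 1" and f: "int_minpoly f (e_n n)"
  shows "map_poly of_int f = cyclo_C n"
proof -
  define A where "A = primitive_roots n"
  have finA: "finite A" by (simp add: A_def primitive_roots_def)
  have "\<forall>a\<in>A. poly (map_poly of_int f) a = 0"
    using int_minpoly_coprime_power_root[OF e_n_power_n[OF n] n f] by (auto simp: A_def primitive_roots_def)
  then have "cyclo_C n dvd map_poly of_int f"
    unfolding cyclo_C_primitive_roots(1)[OF n] A_def[symmetric] by (rule prod_linear_dvd[OF finA])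
  then obtain u where u: "map_poly of_int f = cyclo_C n * u" by (elim dvdE)
  have "degree u = 0"
  proof (rule ccontr)
    assume "degree u \<noteq> 0"
    then obtain \<beta> where \<beta>: "poly u \<beta> = 0" using alg_closed_imp_poly_has_root by blast
    then have "ipoly f \<beta> = 0" by (simp add: u)
    then have "\<beta> \<in> A" unfolding A_def by (rule int_minpoly_e_n_roots_primitive[OF n f])
    then have "poly (cyclo_C n) \<beta> = 0"
      using finA by (simp add: cyclo_C_primitive_roots(1)[OF n] A_def[symmetric] poly_prod)
    then have "[:-\<beta>, 1:] ^ 2 dvd map_poly of_int f"
      using \<beta> unfolding u power2_eq_square poly_eq_0_iff_dvd by (rule mult_dvd_mono)
    moreover have "\<beta> ^ n = 1" using \<open>\<beta> \<in> A\<close> primitive_root_power_n[OF n] by (simp add: A_def)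
    ultimately show False using int_minpoly_no_double_root[OF n f e_n_power_n[OF n]] by blast
  qed
  then obtain c where c: "u = [:c:]" by (metis degree_0_id)
  have "lead_coeff (map_poly of_int f :: complex poly) = 1"
    using int_minpolyD(1)[OF f] by (simp add: degree_map_poly coeff_map_poly)
  then have "lead_coeff (cyclo_C n) * lead_coeff u = 1" by (simp only: u lead_coeff_mult)
  moreover have "lead_coeff (cyclo_C n) = 1" by (simp add: cyclo_C_primitive_roots(1)[OF n] lead_coeff_prod)
  ultimately have "c = 1" by (simp add: c)
  then show ?thesis using u c by simp
qed

lemma cyclo_minpoly:
  assumes n: "n \<ge> 1"
  shows "map_poly of_int (cyclo n) = cyclo_C n" and "int_minpoly (cyclo n) (e_n n)"
proof -
  obtain f where f: "int_minpoly f (e_n n)" using root_of_unity_int_minpoly[OF e_n_power_n[OF n] n] by blast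
  have "cyclo n = f"
    unfolding cyclo_def
  proof (rule the_equality)
    show "map_poly of_int f = cyclo_C n" using int_minpoly_e_n_eq_cyclo_C[OF n f] .
    fix p assume "map_poly of_int p = cyclo_C n"
    then have "map_poly of_int p = (map_poly of_int f :: complex poly)"
      using int_minpoly_e_n_eq_cyclo_C[OF n f] by simp
    then show "p = f" by (rule map_poly_of_int_inj)
  qed
  then show "map_poly of_int (cyclo n) = cyclo_C n" "int_minpoly (cyclo n) (e_n n)"
    using f int_minpoly_e_n_eq_cyclo_C[OF n f] by simp_all
qed

lemma degree_cyclo:
  assumes n: "n \<ge> 1"
  shows "degree (cyclo n) = totient n"
proof -
  have "degree (cyclo n) = degree (cyclo_C n)" using cyclo_minpoly(1)[OF n] by (metis degree_map_poly of_int_eq_0_iff)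
  also have "\<dots> = (\<Sum>a\<in>primitive_roots n. degree [:-a, 1:])"
    unfolding cyclo_C_primitive_roots(1)[OF n] by (rule degree_prod_eq_sum_degree) auto
  also have "\<dots> = totient n" using cyclo_C_primitive_roots(2)[OF n] by simp
  finally show ?thesis .
qed

lemma cyclo_order_le_1: "n \<ge> 1 \<Longrightarrow> order (e_n n) (map_poly of_int (cyclo n)) \<le> 1"
  using int_minpoly_order_le_1 cyclo_minpoly(2) e_n_power_n by blast


section \<open>Free Z-modules of polynomial quotients\<close>

lemma ipoly_low_degree:
  assumes "degree r < N"
  shows "ipoly r z = (\<Sum>j<N. of_int (coeff r j) * z ^ j)"
proof -
  have "ipoly (\<Sum>j<N. monom (coeff r j) j) z = (\<Sum>j<N. of_int (coeff r j) * z ^ j)"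
    by (simp add: ipoly_simps)
  then show ?thesis using sum_monom_coeff[of r N] assms by simp
qed

text \<open>Division with remainder: Z[q]/(g) is free with basis 1, q, ..., q^(deg g - 1) for monic g.\<close>
lemma monic_quotient_free:
  fixes g :: "int poly"
  assumes lc: "lead_coeff g = 1"
  shows "quotient_free_Z_rank UNIV {g * s | s. True} (degree g)"
proof -
  define N where "N = degree g"
  have g0: "g \<noteq> 0" using lc by auto
  have comb: "(\<Sum>i<N. of_int (c i) * monom 1 i) = (\<Sum>i<N. monom (c i) i)" for c
    by (simp add: of_int_poly smult_monom)
  show ?thesis unfolding quotient_free_Z_rank_def N_def[symmetric]
  proof (intro exI[of _ "\<lambda>i. monom 1 i"] conjI ballI allI impI)
    fix a :: "int poly"
    obtain q r where pd: "pseudo_divmod a g = (q, r)" by fastforce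
    from pseudo_divmod[OF g0 pd] lc have "a = g * q + r" and "r = 0 \<or> degree r < N"
      by (simp_all add: N_def)
    moreover from this(2) have "(\<Sum>i<N. monom (coeff r i) i) = r" using sum_monom_coeff by blast
    ultimately have "a - (\<Sum>i<N. of_int (coeff r i) * monom 1 i) = g * q"
      unfolding comb by simp
    then show "\<exists>c. a - (\<Sum>i<N. of_int (c i) * monom 1 i) \<in> {g * s |s. True}" by blast
  next
    fix c :: "nat \<Rightarrow> int" and i :: nat
    assume "(\<Sum>i<N. of_int (c i) * monom 1 i) \<in> {g * s |s. True}" and i: "i < N"
    then obtain s where s: "(\<Sum>i<N. monom (c i) i) = g * s" unfolding comb by blast
    have "s = 0"
    proof (rule ccontr)
      assume "s \<noteq> 0"
      then have "degree (g * s) = N + degree s" using g0 by (simp add: degree_mult_eq N_def)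
      then show False using s degree_sum_monom_less[of N c] i by simp
    qed
    then show "c i = 0" using s i coeff_sum_monom[of c N i] by simp
  qed auto
qed

lemma int_minpoly_ring_free:
  assumes f: "int_minpoly f z"
  shows "quotient_free_Z_rank {w. \<exists>p. w = ipoly p z} {0} (degree f)"
  unfolding quotient_free_Z_rank_def
proof (intro exI[of _ "\<lambda>j. z ^ j"] conjI ballI allI impI)
  fix j show "z ^ j \<in> {w. \<exists>p. w = ipoly p z}" by (metis (mono_tags) ipoly_simps(6) mem_Collect_eq mult_1 of_int_1)
next
  fix a assume "a \<in> {w. \<exists>p. w = ipoly p z}"
  then obtain p where p: "a = ipoly p z" by blast
  have f0: "f \<noteq> 0" using int_minpolyD(1)[OF f] by auto
  obtain s r where pd: "pseudo_divmod p f = (s, r)" by fastforce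
  from pseudo_divmod[OF f0 pd] int_minpolyD(1)[OF f]
  have eq: "p = f * s + r" and rd: "r = 0 \<or> degree r < degree f" by simp_all
  have "a = ipoly r z" using p eq int_minpolyD(2)[OF f] by (simp add: ipoly_simps)
  also have "\<dots> = (\<Sum>j<degree f. of_int (coeff r j) * z ^ j)"
    using rd int_minpoly_degree_pos[OF f] by (auto intro: ipoly_low_degree)
  finally show "\<exists>c. a - (\<Sum>j<degree f. of_int (c j) * z ^ j) \<in> {0}" by auto
next
  fix c :: "nat \<Rightarrow> int" and i
  assume "(\<Sum>j<degree f. of_int (c j) * z ^ j) \<in> {0}" and i: "i < degree f"
  define r where "r = (\<Sum>j<degree f. monom (c j) j)"
  have "ipoly r z = 0" using \<open>_ \<in> {0}\<close> by (simp add: r_def ipoly_simps)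
  moreover have "degree r < degree f" unfolding r_def using i by (intro degree_sum_monom_less) simp
  ultimately have "r = 0" using int_minpoly_degree_le[OF f] by fastforce
  then show "c i = 0" using coeff_sum_monom[of c "degree f" i] i by (simp add: r_def)
qed


locale int_subring =
  fixes R :: "'a::comm_ring_1 set"
  assumes of_int_mem: "of_int c \<in> R"
    and diff_mem: "a \<in> R \<Longrightarrow> b \<in> R \<Longrightarrow> a - b \<in> R"
    and mult_mem: "a \<in> R \<Longrightarrow> b \<in> R \<Longrightarrow> a * b \<in> R"

definition poly_over :: "'a::zero set \<Rightarrow> 'a poly set" where
  "poly_over R = {p. \<forall>i. coeff p i \<in> R}"

context int_subring
begin

lemma zero_mem: "0 \<in> R"
  using of_int_mem[of 0] by simp

lemma add_mem: "a \<in> R \<Longrightarrow> b \<in> R \<Longrightarrow> a + b \<in> R"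
  using diff_mem[of a "0 - b"] diff_mem[OF zero_mem, of b] by simp

lemma sum_mem: "finite A \<Longrightarrow> (\<And>i. i \<in> A \<Longrightarrow> f i \<in> R) \<Longrightarrow> sum f A \<in> R"
  by (induction A rule: finite_induct) (auto intro: add_mem zero_mem)

lemma poly_over_zero: "0 \<in> poly_over R"
  by (simp add: poly_over_def zero_mem)

lemma poly_over_add: "p \<in> poly_over R \<Longrightarrow> q \<in> poly_over R \<Longrightarrow> p + q \<in> poly_over R"
  by (simp add: poly_over_def add_mem)

lemma poly_over_diff: "p \<in> poly_over R \<Longrightarrow> q \<in> poly_over R \<Longrightarrow> p - q \<in> poly_over R"
  by (simp add: poly_over_def diff_mem)

lemma poly_over_mult: "p \<in> poly_over R \<Longrightarrow> q \<in> poly_over R \<Longrightarrow> p * q \<in> poly_over R"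
  by (auto simp: poly_over_def coeff_mult intro!: sum_mem mult_mem)

lemma poly_over_of_int: "of_int c \<in> poly_over R"
  by (simp add: poly_over_def of_int_poly coeff_pCons of_int_mem zero_mem split: nat.split)

lemma poly_over_monom: "a \<in> R \<Longrightarrow> monom a m \<in> poly_over R"
  by (simp add: poly_over_def coeff_monom zero_mem)

lemma poly_over_const: "a \<in> R \<Longrightarrow> [:a:] \<in> poly_over R"
  using poly_over_monom[of a 0] by (simp add: monom_0)

lemma poly_over_power: "p \<in> poly_over R \<Longrightarrow> p ^ m \<in> poly_over R"
  using poly_over_const[OF of_int_mem[of 1]] by (induction m) (auto intro: poly_over_mult simp: one_pCons)

lemma poly_over_sum: "finite A \<Longrightarrow> (\<And>i. i \<in> A \<Longrightarrow> f i \<in> poly_over R) \<Longrightarrow> sum f A \<in> poly_over R"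
  by (induction A rule: finite_induct) (simp_all add: poly_over_zero poly_over_add)

lemma poly_over_pcompose: "p \<in> poly_over R \<Longrightarrow> q \<in> poly_over R \<Longrightarrow> pcompose p q \<in> poly_over R"
proof (induction p)
  case (pCons a p)
  have "coeff (pCons a p) 0 \<in> R" "\<And>i. coeff (pCons a p) (Suc i) \<in> R"
    using pCons.prems(1) unfolding poly_over_def by blast+
  then have "a \<in> R" "p \<in> poly_over R" by (simp_all add: poly_over_def)
  then show ?case using pCons by (simp add: pcompose_pCons poly_over_add poly_over_const poly_over_mult)
qed simp

lemma poly_over_divisible_by_monom:
  assumes "p \<in> poly_over R" "\<And>m. m < k \<Longrightarrow> coeff p m = 0"
  shows "\<exists>s \<in> poly_over R. p = monom 1 k * s"
proof
  show "poly_shift k p \<in> poly_over R" using assms(1) by (simp add: poly_over_def coeff_poly_shift)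
  show "p = monom 1 k * poly_shift k p"
    by (rule poly_eqI) (auto simp: coeff_monom_mult coeff_poly_shift assms(2))
qed

end

text \<open>The coefficient of x^m in the combination of the elements beta_j x^m (j < D, m < k),
  listed in the order i = m * D + j.\<close>
lemma coeff_block_combination:
  fixes c :: "nat \<Rightarrow> int" and \<beta> :: "nat \<Rightarrow> 'a::comm_ring_1"
  shows "coeff (\<Sum>i<k * D. of_int (c i) * monom (\<beta> (i mod D)) (i div D)) m
       = (if m < k then \<Sum>j<D. of_int (c (m * D + j)) * \<beta> j else 0)"
proof -
  define g where "g i = coeff (of_int (c i) * monom (\<beta> (i mod D)) (i div D)) m" for i
  have block: "(\<Sum>i\<in>{m' * D..<m' * D + D}. g i)
      = (if m' = m then \<Sum>j<D. of_int (c (m * D + j)) * \<beta> j else 0)" for m'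
  proof -
    have "(\<Sum>i\<in>{m' * D..<m' * D + D}. g i) = (\<Sum>j<D. g (m' * D + j))"
      using sum.shift_bounds_nat_ivl[of g 0 "m' * D" D] by (simp add: atLeast0LessThan add.commute)
    also have "\<dots> = (\<Sum>j<D. if m' = m then of_int (c (m * D + j)) * \<beta> j else 0)"
    proof (rule sum.cong)
      fix j assume "j \<in> {..<D}"
      then have "(m' * D + j) div D = m'" "(m' * D + j) mod D = j" by auto
      then show "g (m' * D + j) = (if m' = m then of_int (c (m * D + j)) * \<beta> j else 0)"
        by (simp add: g_def of_int_poly smult_monom coeff_monom)
    qed simp
    finally show ?thesis by simp
  qed
  have "coeff (\<Sum>i<k * D. of_int (c i) * monom (\<beta> (i mod D)) (i div D)) m
      = (\<Sum>m'<k. \<Sum>i\<in>{m' * D..<m' * D + D}. g i)"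
    by (simp add: coeff_sum sum.nat_group g_def)
  also have "\<dots> = (if m < k then \<Sum>j<D. of_int (c (m * D + j)) * \<beta> j else 0)"
    unfolding block by (simp add: sum.delta)
  finally show ?thesis .
qed

lemma (in int_subring) truncated_poly_ring_free:
  assumes "quotient_free_Z_rank R {0} D"
  shows "quotient_free_Z_rank (poly_over R) {monom 1 k * s | s. s \<in> poly_over R} (k * D)"
proof -
  obtain \<beta> where \<beta>R: "\<And>j. j < D \<Longrightarrow> \<beta> j \<in> R"
    and span: "\<And>a. a \<in> R \<Longrightarrow> \<exists>c. a = (\<Sum>j<D. of_int (c j) * \<beta> j)"
    and indep: "\<And>c. (\<Sum>j<D. of_int (c j) * \<beta> j) = 0 \<Longrightarrow> \<forall>j<D. c j = 0"
    using assms unfolding quotient_free_Z_rank_def by auto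
  define b where "b i = monom (\<beta> (i mod D)) (i div D)" for i
  have bR: "b i \<in> poly_over R" if "i < k * D" for i
  proof -
    have "i mod D < D" using that by (cases "D = 0") auto
    then show ?thesis unfolding b_def by (intro poly_over_monom \<beta>R)
  qed
  have comb: "(\<Sum>i<k * D. of_int (c i) * b i) \<in> poly_over R" for c
    using bR by (intro poly_over_sum poly_over_mult poly_over_of_int) auto
  have cf: "coeff (\<Sum>i<k * D. of_int (c i) * b i) m
      = (if m < k then \<Sum>j<D. of_int (c (m * D + j)) * \<beta> j else 0)" for c m
    unfolding b_def by (rule coeff_block_combination)
  show ?thesis unfolding quotient_free_Z_rank_def
  proof (intro exI[of _ b] conjI ballI allI impI)
    fix a assume a: "a \<in> poly_over R"
    have "\<forall>m. \<exists>c. coeff a m = (\<Sum>j<D. of_int (c j) * \<beta> j)"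
      using span a unfolding poly_over_def by blast
    then obtain C where C: "\<And>m. coeff a m = (\<Sum>j<D. of_int (C m j) * \<beta> j)" by metis
    define c where "c i = C (i div D) (i mod D)" for i
    define P where "P = a - (\<Sum>i<k * D. of_int (c i) * b i)"
    have "coeff P m = 0" if "m < k" for m
      using that by (simp add: P_def cf C c_def)
    then obtain s where "s \<in> poly_over R" "P = monom 1 k * s"
      using poly_over_divisible_by_monom[of P k] a comb by (auto simp: P_def intro: poly_over_diff)
    then show "\<exists>c. a - (\<Sum>i<k * D. of_int (c i) * b i) \<in> {monom 1 k * s |s. s \<in> poly_over R}"
      unfolding P_def by blast
  next
    fix c :: "nat \<Rightarrow> int" and i
    assume "(\<Sum>i<k * D. of_int (c i) * b i) \<in> {monom 1 k * s |s. s \<in> poly_over R}" and i: "i < k * D"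
    then obtain s where s: "(\<Sum>i<k * D. of_int (c i) * b i) = monom 1 k * s" by blast
    have "D \<noteq> 0" using i by (metis less_nat_zero_code mult_0_right)
    then have D: "i mod D < D" "i div D < k" using i by (auto simp: less_mult_imp_div_less)
    then have "(\<Sum>j<D. of_int (c (i div D * D + j)) * \<beta> j) = 0"
      using cf[of c "i div D"] s by (simp add: coeff_monom_mult)
    then show "c i = 0" using indep D(1) by fastforce
  qed (use bR in auto)
qed


lemma ipoly_ring_subring: "int_subring {w. \<exists>p. w = ipoly p z}"
proof
  show "of_int c \<in> {w. \<exists>p. w = ipoly p z}" for c by (metis (mono_tags) ipoly_simps(7) mem_Collect_eq)
  show "a - b \<in> {w. \<exists>p. w = ipoly p z}" "a * b \<in> {w. \<exists>p. w = ipoly p z}"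
    if "a \<in> {w. \<exists>p. w = ipoly p z}" "b \<in> {w. \<exists>p. w = ipoly p z}" for a b
    using that by (auto simp flip: ipoly_simps(2,3))
qed

lemma Zen_subring: "int_subring (Zen n)"
  unfolding Zen_def by (rule ipoly_ring_subring)

lemma Zen_poly_poly_over: "Zen_poly n = poly_over (Zen n)"
  by (simp add: Zen_poly_def poly_over_def)

lemma Zen_free: "n \<ge> 1 \<Longrightarrow> quotient_free_Z_rank (Zen n) {0} (totient n)"
  unfolding Zen_def using int_minpoly_ring_free[OF cyclo_minpoly(2)] degree_cyclo by metis


section \<open>The homomorphism q \<mapsto> e_n + x\<close>

lemma hom0_1: "hom0 n 1 = 1"
  by (simp add: hom0_def pcompose_1)

lemma hom0_add: "hom0 n (p + q) = hom0 n p + hom0 n q"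
  by (simp add: hom0_def map_poly_of_int_add pcompose_add)

lemma hom0_mult: "hom0 n (p * q) = hom0 n p * hom0 n q"
  by (simp add: hom0_def map_poly_of_int_mult pcompose_mult)

lemma hom0_power: "hom0 n (p ^ k) = hom0 n p ^ k"
  by (simp add: hom0_def map_poly_of_int_power pcompose_power_left)

lemma hom0_Zen_poly: "hom0 n p \<in> Zen_poly n"
proof -
  interpret int_subring "Zen n" by (rule Zen_subring)
  have "e_n n \<in> Zen n"
    unfolding Zen_def by (metis (mono_tags) ipoly_simps(6) mem_Collect_eq mult_1 of_int_1 power_one_right)
  moreover have "1 \<in> Zen n" using of_int_mem[of 1] by simp
  ultimately have "[:e_n n, 1:] \<in> poly_over (Zen n)"
    by (simp add: poly_over_def coeff_pCons zero_mem split: nat.split)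
  moreover have "map_poly of_int p \<in> poly_over (Zen n)"
    by (simp add: poly_over_def coeff_map_poly of_int_mem)
  ultimately show ?thesis unfolding hom0_def Zen_poly_poly_over by (intro poly_over_pcompose)
qed

text \<open>Since Phi_n(e_n) = 0, the image of Phi_n is divisible by x, so (Phi_n^k) maps into (x^k).\<close>
lemma hom0_ideal_E: "n \<ge> 1 \<Longrightarrow> p \<in> ideal_E n k \<Longrightarrow> hom0 n p \<in> ideal_G n k"
proof -
  assume n: "n \<ge> 1" and "p \<in> ideal_E n k"
  then obtain s where s: "p = cyclo n ^ k * s" by (auto simp: ideal_E_def)
  interpret int_subring "Zen n" by (rule Zen_subring)
  have "coeff (hom0 n (cyclo n)) 0 = ipoly (cyclo n) (e_n n)"
    by (simp add: hom0_def poly_0_coeff_0[symmetric] poly_pcompose)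
  then have "coeff (hom0 n (cyclo n)) 0 = 0" using int_minpolyD(2)[OF cyclo_minpoly(2)[OF n]] by simp
  then obtain t where t: "t \<in> Zen_poly n" "hom0 n (cyclo n) = monom 1 1 * t"
    using poly_over_divisible_by_monom[of "hom0 n (cyclo n)" 1] hom0_Zen_poly
    by (auto simp: Zen_poly_poly_over)
  have "hom0 n p = monom 1 k * (t ^ k * hom0 n s)"
    by (simp add: s hom0_mult hom0_power t(2) power_mult_distrib monom_power mult.assoc)
  moreover have "t ^ k * hom0 n s \<in> Zen_poly n"
    using t(1) hom0_Zen_poly unfolding Zen_poly_poly_over by (intro poly_over_mult poly_over_power)
  ultimately show ?thesis by (auto simp: ideal_G_def)
qed

lemma int_minpoly_power_dvd:
  assumes f: "int_minpoly f z" and simple: "order z (map_poly of_int f) \<le> 1"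
  shows "[:-z, 1:] ^ k dvd map_poly of_int p \<Longrightarrow> f ^ k dvd p"
proof (induction k arbitrary: p)
  case (Suc k)
  have "[:-z, 1:] dvd map_poly of_int p" using Suc.prems by (metis dvd_power dvd_trans zero_less_Suc)
  then have "ipoly p z = 0" by (simp add: poly_eq_0_iff_dvd)
  then have "f dvd p" by (rule int_minpolyD(3)[OF f])
  then obtain p1 where p1: "p = f * p1" by (elim dvdE)
  show ?case
  proof (cases "p1 = 0")
    case False
    have mp: "map_poly of_int p = map_poly of_int f * (map_poly of_int p1 :: complex poly)"
      using p1 by (simp add: map_poly_of_int_mult)
    have "f \<noteq> 0" using int_minpolyD(1)[OF f] by auto
    then have nz: "map_poly of_int f * (map_poly of_int p1 :: complex poly) \<noteq> 0"
      using False by (simp add: map_poly_eq_0_iff)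
    have "map_poly of_int p = (0 :: complex poly) \<or> Suc k \<le> order z (map_poly of_int p)"
      using Suc.prems unfolding order_divides .
    then have "Suc k \<le> order z (map_poly of_int p)" using nz mp by auto
    also have "\<dots> = order z (map_poly of_int f) + order z (map_poly of_int p1)"
      using mp nz by (simp add: order_mult)
    finally have "[:-z, 1:] ^ k dvd map_poly of_int p1" using simple by (simp add: order_divides)
    then show ?thesis using Suc.IH p1 by simp
  qed (simp add: p1)
qed simp

text \<open>Conversely, substituting q = x + e_n back shows that h(p) in (x^k) forces
  (q - e_n)^k to divide p over C, hence Phi_n^k to divide p.\<close>
lemma hom0_reflects_ideal: "n \<ge> 1 \<Longrightarrow> hom0 n p \<in> ideal_G n k \<Longrightarrow> p \<in> ideal_E n k"
proof -
  assume n: "n \<ge> 1" and "hom0 n p \<in> ideal_G n k"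
  then obtain s where s: "hom0 n p = monom 1 k * s" by (auto simp: ideal_G_def)
  define L :: "complex poly" where "L = [:-e_n n, 1:]"
  have "pcompose [:e_n n, 1:] L = [:0, 1:]" by (simp add: L_def pcompose_pCons)
  then have "map_poly of_int p = pcompose (hom0 n p) L"
    by (simp add: hom0_def pcompose_assoc[symmetric])
  also have "\<dots> = L ^ k * pcompose s L" by (simp add: s pcompose_mult pcompose_monom_one)
  finally have "L ^ k dvd map_poly of_int p" by simp
  then have "cyclo n ^ k dvd p"
    unfolding L_def by (rule int_minpoly_power_dvd[OF cyclo_minpoly(2)[OF n] cyclo_order_le_1[OF n]])
  then show ?thesis by (auto simp: ideal_E_def elim!: dvdE)
qed


lemma ideal_E_free:
  assumes n: "n \<ge> 1"
  shows "quotient_free_Z_rank UNIV (ideal_E n k) (k * totient n)"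
proof -
  have lc: "lead_coeff (cyclo n) = 1" by (rule int_minpolyD(1)[OF cyclo_minpoly(2)[OF n]])
  then have "degree (cyclo n ^ k) = k * totient n"
    using degree_cyclo[OF n] by (subst degree_power_eq) auto
  moreover have "lead_coeff (cyclo n ^ k) = 1" using lc by (simp add: lead_coeff_power)
  ultimately show ?thesis using monic_quotient_free[of "cyclo n ^ k"] by (simp add: ideal_E_def)
qed

lemma ideal_G_free: "n \<ge> 1 \<Longrightarrow> quotient_free_Z_rank (Zen_poly n) (ideal_G n k) (k * totient n)"
  using int_subring.truncated_poly_ring_free[OF Zen_subring Zen_free]
  by (simp add: ideal_G_def Zen_poly_poly_over)

theorem proposition10:
  fixes n k :: nat
  assumes "n \<ge> 1" and "k \<ge> 1"
  shows "quotient_free_Z_rank (UNIV :: int poly set) (ideal_E n k) (k * totient n)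
       \<and> quotient_free_Z_rank (Zen_poly n) (ideal_G n k) (k * totient n)
       \<and> (\<forall>p. hom0 n p \<in> Zen_poly n)
       \<and> hom0 n 1 = 1
       \<and> (\<forall>p q. hom0 n (p + q) = hom0 n p + hom0 n q)
       \<and> (\<forall>p q. hom0 n (p * q) = hom0 n p * hom0 n q)
       \<and> (\<forall>p. p \<in> ideal_E n k \<longrightarrow> hom0 n p \<in> ideal_G n k)
       \<and> (\<forall>p. hom0 n p \<in> ideal_G n k \<longrightarrow> p \<in> ideal_E n k)"
  using ideal_E_free[OF assms(1)] ideal_G_free[OF assms(1)] hom0_Zen_poly hom0_1 hom0_add
    hom0_mult hom0_ideal_E[OF assms(1)] hom0_reflects_ideal[OF assms(1)] by blast

end
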